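(* The set $\mathcal{M}_1$ is affinely homeomorphic (with weak* topologies) to the set $\mathcal{M}_\tau$ of T-invariant means on $C_{ub}(\mathbb{R}_+)$.
   Context: $L^{\infty}(\mathbb{R}_+)$: real-valued essentially bounded measurable functions on $[0,\infty)$; $C_{ub}(\mathbb{R}_+)$: its closed subspace of uniformly continuous bounded functions. A mean is a positive linear functional with value $1$ at the constant $1$. $\overline{M}_1(f)=\lim_{\theta\to\infty}\limsup_{x\to\infty}\frac1\theta\int_x^{x+\theta}f(t)\,dt$, and $\mathcal{M}_1$ is the set of means $\varphi$ on $L^{\infty}(\mathbb{R}_+)$ with $\varphi(f)\le\overline{M}_1(f)$ for all $f\in L^{\infty}(\mathbb{R}_+)$. A T-invariant mean on $C_{ub}(\mathbb{R}_+)$ is a mean $\varphi$ on $C_{ub}(\mathbb{R}_+)$ with $\varphi(T_sf)=\varphi(f)$ for all $s\ge0$, $(T_sf)(x)=f(x+s)$. *)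

theory Defs
  imports "HOL-Analysis.Analysis"
begin

text \<open>Elements of L-infinity(R+) are represented by Lebesgue measurable real functions
  that are essentially bounded on [0,inf) and vanish on (-inf,0). Functionals are
  represented extensionally (value 0 outside their domain), so the weak* topology is the
  topology of pointwise convergence, i.e. the product topology restricted to the set.\<close>

definition Linf :: "(real \<Rightarrow> real) set" where
  "Linf = {f. f \<in> borel_measurable lebesgue \<and> (\<exists>B. AE x in lebesgue. \<bar>f x\<bar> \<le> B)
              \<and> (\<forall>x<0. f x = 0)}"

definition Cub :: "(real \<Rightarrow> real) set" where
  "Cub = {f. uniformly_continuous_on {0..} f \<and> bounded (f ` {0..}) \<and> (\<forall>x<0. f x = 0)}"

definition one_plus :: "real \<Rightarrow> real" where
  "one_plus x = (if 0 \<le> x then 1 else 0)"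

definition shiftT :: "real \<Rightarrow> (real \<Rightarrow> real) \<Rightarrow> real \<Rightarrow> real" where
  "shiftT s f x = (if 0 \<le> x then f (x + s) else 0)"

definition lin_on :: "(real \<Rightarrow> real) set \<Rightarrow> ((real \<Rightarrow> real) \<Rightarrow> real) \<Rightarrow> bool" where
  "lin_on D \<phi> \<longleftrightarrow> (\<forall>f\<in>D. \<forall>g\<in>D. \<forall>a b. \<phi> (\<lambda>x. a * f x + b * g x) = a * \<phi> f + b * \<phi> g)"

definition mean_Linf :: "((real \<Rightarrow> real) \<Rightarrow> real) \<Rightarrow> bool" where
  "mean_Linf \<phi> \<longleftrightarrow> lin_on Linf \<phi>
     \<and> (\<forall>f\<in>Linf. (AE x in lebesgue. 0 \<le> x \<longrightarrow> 0 \<le> f x) \<longrightarrow> 0 \<le> \<phi> f)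
     \<and> \<phi> one_plus = 1
     \<and> (\<forall>f. f \<notin> Linf \<longrightarrow> \<phi> f = 0)"

definition mean_Cub :: "((real \<Rightarrow> real) \<Rightarrow> real) \<Rightarrow> bool" where
  "mean_Cub \<phi> \<longleftrightarrow> lin_on Cub \<phi>
     \<and> (\<forall>f\<in>Cub. (\<forall>x\<ge>0. 0 \<le> f x) \<longrightarrow> 0 \<le> \<phi> f)
     \<and> \<phi> one_plus = 1
     \<and> (\<forall>f. f \<notin> Cub \<longrightarrow> \<phi> f = 0)"

definition upper_M1 :: "(real \<Rightarrow> real) \<Rightarrow> ereal" where
  "upper_M1 f = Lim at_top (\<lambda>\<theta>::real. Limsup at_top (\<lambda>x::real.
        ereal ((1 / \<theta>) * (LINT t:{x..x+\<theta>}|lebesgue. f t))))"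

definition M1 :: "((real \<Rightarrow> real) \<Rightarrow> real) set" where
  "M1 = {\<phi>. mean_Linf \<phi> \<and> (\<forall>f\<in>Linf. ereal (\<phi> f) \<le> upper_M1 f)}"

definition Mtau :: "((real \<Rightarrow> real) \<Rightarrow> real) set" where
  "Mtau = {\<phi>. mean_Cub \<phi> \<and> (\<forall>s\<ge>0. \<forall>f\<in>Cub. \<phi> (shiftT s f) = \<phi> f)}"

definition weak_star :: "((real \<Rightarrow> real) \<Rightarrow> real) set \<Rightarrow> ((real \<Rightarrow> real) \<Rightarrow> real) topology" where
  "weak_star S = subtopology (product_topology (\<lambda>_. euclideanreal) UNIV) S"

end

theory Submission
  imports Defs
begin

text \<open>Write \<open>A f x\<close> for the integral of \<open>f\<close> over \<open>[x, x + 1]\<close>. For \<open>f \<in> L\<^sup>\<infinity>\<close> the function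
  \<open>A f\<close> is Lipschitz, so \<open>A\<close> maps \<open>L\<^sup>\<infinity>\<close> into \<open>C\<^sub>u\<^sub>b\<close>. A mean \<open>\<phi>\<close> dominated by the upper mean
  vanishes on every \<open>f\<close> whose integrals over \<open>[x, x + \<theta>]\<close> are bounded independently of \<open>x\<close>
  and \<open>\<theta>\<close>, because the upper means of \<open>f\<close> and \<open>-f\<close> are then \<open>0\<close>. Both \<open>T\<^sub>s g - g\<close> and \<open>A f - f\<close>
  are of this kind, so the restriction of \<open>\<phi>\<close> to \<open>C\<^sub>u\<^sub>b\<close> is \<open>T\<close>-invariant and \<open>\<phi> = \<phi> \<circ> A\<close>.

  Conversely, let \<open>\<psi>\<close> be a \<open>T\<close>-invariant mean. For \<open>g \<in> C\<^sub>u\<^sub>b\<close>, \<open>A g\<close> is uniformly close to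
  Riemann sums that are averages of shifts of \<open>g\<close>, hence \<open>\<psi> (A g) = \<psi> g\<close>. For \<open>f \<in> L\<^sup>\<infinity>\<close>,
  \<open>\<psi> (A f)\<close> is \<open>\<psi>\<close> of the average of the unit shifts \<open>T\<^sub>j (A f)\<close>, \<open>j < n\<close>, which is the average
  of \<open>f\<close> over \<open>[x, x + n]\<close>; so \<open>\<psi> (A f)\<close> is bounded by the upper mean of \<open>f\<close>. Restriction to
  \<open>C\<^sub>u\<^sub>b\<close> and composition with \<open>A\<close> are therefore mutually inverse affine maps, both continuous
  for the topologies of pointwise convergence.\<close>

lemma Linf_AE_bound:
  assumes "f \<in> Linf"
  obtains B where "0 \<le> B" and "AE x in lebesgue. \<bar>f x\<bar> \<le> B"
proof -
  obtain B where "AE x in lebesgue. \<bar>f x\<bar> \<le> B" using assms unfolding Linf_def by auto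
  then have "AE x in lebesgue. \<bar>f x\<bar> \<le> max B 0" by (auto elim: eventually_mono)
  then show ?thesis using that[of "max B 0"] by auto
qed

lemma Linf_measurable: "f \<in> Linf \<Longrightarrow> f \<in> borel_measurable lebesgue"
  unfolding Linf_def by auto

lemma Linf_set_integrable:
  assumes "f \<in> Linf"
  shows "set_integrable lebesgue {a..b} f"
proof -
  obtain B where B: "0 \<le> B" "AE x in lebesgue. \<bar>f x\<bar> \<le> B" using Linf_AE_bound[OF assms] .
  have "integrable lebesgue (\<lambda>x. B * indicator {a..b} x)"
    by (intro integrable_mult_right integrable_real_indicator) (auto simp: emeasure_lborel_Icc_eq)
  moreover have "(\<lambda>x. indicator {a..b} x *\<^sub>R f x) \<in> borel_measurable lebesgue"
    using Linf_measurable[OF assms] by (intro borel_measurable_scaleR borel_measurable_indicator) auto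
  moreover have "AE x in lebesgue. norm (indicator {a..b} x *\<^sub>R f x) \<le> norm (B * indicator {a..b} x)"
    using B(2) by eventually_elim (use B(1) in \<open>auto simp: indicator_def\<close>)
  ultimately show ?thesis unfolding set_integrable_def by (rule Bochner_Integration.integrable_bound)
qed

lemma Linf_integrable_on: "f \<in> Linf \<Longrightarrow> f integrable_on {a..b}"
  using set_lebesgue_integral_eq_integral(1)[OF Linf_set_integrable] by blast

lemma Linf_LINT_eq_integral: "f \<in> Linf \<Longrightarrow> (LINT t:{a..b}|lebesgue. f t) = integral {a..b} f"
  using set_lebesgue_integral_eq_integral(2)[OF Linf_set_integrable] by blast

lemma Linf_integral_abs_le:
  assumes f: "f \<in> Linf" and B: "AE x in lebesgue. \<bar>f x\<bar> \<le> B" and "a \<le> b"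
  shows "\<bar>integral {a..b} f\<bar> \<le> B * (b - a)"
proof -
  let ?F = "\<lambda>x. indicator {a..b} x *\<^sub>R f x" and ?G = "\<lambda>x. B * indicator {a..b} x"
  have F: "integrable lebesgue ?F"
    using Linf_set_integrable[OF f] unfolding set_integrable_def .
  have G: "integrable lebesgue ?G"
    by (intro integrable_mult_right integrable_real_indicator) (auto simp: emeasure_lborel_Icc_eq)
  have "integral\<^sup>L lebesgue ?F \<le> integral\<^sup>L lebesgue ?G"
    by (rule integral_mono_AE[OF F G]) (use B in \<open>auto elim!: eventually_mono simp: indicator_def\<close>)
  moreover have "integral\<^sup>L lebesgue (\<lambda>x. - ?G x) \<le> integral\<^sup>L lebesgue ?F"
    by (rule integral_mono_AE[OF _ F]) (use B G in \<open>auto elim!: eventually_mono simp: indicator_def\<close>)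
  ultimately show ?thesis
    using Linf_LINT_eq_integral[OF f, of a b] \<open>a \<le> b\<close> unfolding set_lebesgue_integral_def by simp
qed

lemma Linf_integral_nonneg:
  assumes f: "f \<in> Linf" and "AE x in lebesgue. 0 \<le> x \<longrightarrow> 0 \<le> f x" and "0 \<le> a"
  shows "0 \<le> integral {a..b} f"
proof -
  have "0 \<le> integral\<^sup>L lebesgue (\<lambda>x. indicator {a..b} x *\<^sub>R f x)"
    by (rule integral_nonneg_AE) (use assms in \<open>auto elim!: eventually_mono simp: indicator_def\<close>)
  then show ?thesis using Linf_LINT_eq_integral[OF f, of a b] unfolding set_lebesgue_integral_def by simp
qed

lemma Linf_lin_comb:
  assumes f: "f \<in> Linf" and g: "g \<in> Linf"
  shows "(\<lambda>x. a * f x + b * g x) \<in> Linf"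
proof -
  obtain B C where B: "AE x in lebesgue. \<bar>f x\<bar> \<le> B" and C: "AE x in lebesgue. \<bar>g x\<bar> \<le> C"
    using Linf_AE_bound[OF f] Linf_AE_bound[OF g] by metis
  have "AE x in lebesgue. \<bar>a * f x + b * g x\<bar> \<le> \<bar>a\<bar> * B + \<bar>b\<bar> * C"
    using B C
  proof eventually_elim
    case (elim x)
    have "\<bar>a * f x\<bar> \<le> \<bar>a\<bar> * B" "\<bar>b * g x\<bar> \<le> \<bar>b\<bar> * C"
      using elim by (simp_all add: abs_mult mult_left_mono)
    then show ?case by simp
  qed
  moreover have "(\<lambda>x. a * f x + b * g x) \<in> borel_measurable lebesgue"
    using Linf_measurable[OF f] Linf_measurable[OF g] by measurable
  ultimately show ?thesis using f g unfolding Linf_def by auto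
qed

lemma uniformly_continuous_on_cong:
  fixes f g :: "'a::metric_space \<Rightarrow> 'b::metric_space"
  assumes "\<And>x. x \<in> S \<Longrightarrow> f x = g x" and "uniformly_continuous_on S f"
  shows "uniformly_continuous_on S g"
  using assms unfolding uniformly_continuous_on_def by metis

lemma uniformly_continuous_on_subset:
  fixes f :: "'a::metric_space \<Rightarrow> 'b::metric_space"
  assumes "uniformly_continuous_on T f" and "S \<subseteq> T"
  shows "uniformly_continuous_on S f"
  using assms unfolding uniformly_continuous_on_def by (meson subsetD)

lemma Cub_uniformly_continuous: "g \<in> Cub \<Longrightarrow> uniformly_continuous_on {0..} g"
  unfolding Cub_def by auto

lemma Cub_bound:
  assumes "g \<in> Cub"
  obtains M where "\<And>x. \<bar>g x\<bar> \<le> M"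
proof -
  obtain M where M: "\<And>y. y \<in> g ` {0..} \<Longrightarrow> norm y \<le> M"
    using assms unfolding Cub_def by (auto simp: bounded_iff)
  have "\<bar>g x\<bar> \<le> max M 0" for x
    using assms M[of "g x"] unfolding Cub_def by (cases "x < 0") auto
  then show ?thesis using that by blast
qed

lemma one_plus_Cub: "one_plus \<in> Cub"
proof -
  have "uniformly_continuous_on {0..} one_plus"
    by (rule uniformly_continuous_on_cong[OF _ uniformly_continuous_on_const[of _ 1]])
       (auto simp: one_plus_def)
  moreover have "bounded (one_plus ` {0..})"
    by (rule boundedI[of _ 1]) (auto simp: one_plus_def)
  ultimately show ?thesis unfolding Cub_def by (auto simp: one_plus_def)
qed

lemma Cub_subset_Linf: "Cub \<subseteq> Linf"
proof
  fix g assume g: "g \<in> Cub"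
  have c: "continuous_on {0..} g"
    using uniformly_continuous_imp_continuous[OF Cub_uniformly_continuous[OF g]] .
  have "(\<lambda>x. if x \<in> {0..} then g x else 0) \<in> borel_measurable lebesgue"
    by (rule borel_measurable_if_I[OF continuous_imp_measurable_on_sets_lebesgue[OF c]]) auto
  moreover have "(\<lambda>x. if x \<in> {0..} then g x else 0) = g"
    using g unfolding Cub_def by (auto simp: fun_eq_iff)
  moreover obtain M where "\<And>x. \<bar>g x\<bar> \<le> M" using Cub_bound[OF g] by blast
  ultimately show "g \<in> Linf" using g unfolding Linf_def Cub_def by auto
qed

lemma Cub_lin_comb:
  assumes f: "f \<in> Cub" and g: "g \<in> Cub"
  shows "(\<lambda>x. a * f x + b * g x) \<in> Cub"
proof -
  obtain M N where M: "\<And>x. \<bar>f x\<bar> \<le> M" and N: "\<And>x. \<bar>g x\<bar> \<le> N"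
    using Cub_bound[OF f] Cub_bound[OF g] by metis
  have "uniformly_continuous_on {0..} (\<lambda>x. a * f x + b * g x)"
    using Cub_uniformly_continuous[OF f] Cub_uniformly_continuous[OF g]
    by (intro uniformly_continuous_on_add uniformly_continuous_on_cmul_left)
  moreover have "bounded ((\<lambda>x. a * f x + b * g x) ` {0..})"
  proof (rule boundedI[of _ "\<bar>a\<bar> * M + \<bar>b\<bar> * N"])
    fix y assume "y \<in> (\<lambda>x. a * f x + b * g x) ` {0..}"
    then obtain x where y: "y = a * f x + b * g x" by auto
    have "\<bar>a * f x\<bar> \<le> \<bar>a\<bar> * M" "\<bar>b * g x\<bar> \<le> \<bar>b\<bar> * N"
      using M N by (simp_all add: abs_mult mult_left_mono)
    then show "norm y \<le> \<bar>a\<bar> * M + \<bar>b\<bar> * N" unfolding y by simp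
  qed
  ultimately show ?thesis using f g unfolding Cub_def by auto
qed

lemma Cub_sum:
  fixes n :: nat
  assumes "\<And>j. j < n \<Longrightarrow> h j \<in> Cub"
  shows "(\<lambda>x. \<Sum>j<n. c j * h j x) \<in> Cub"
  using assms
proof (induction n)
  case 0
  then show ?case using Cub_lin_comb[OF one_plus_Cub one_plus_Cub, of 0 0] by simp
next
  case (Suc n)
  have "(\<lambda>x. 1 * (\<Sum>j<n. c j * h j x) + c n * h n x) \<in> Cub"
    by (rule Cub_lin_comb) (use Suc in auto)
  then show ?case by simp
qed

lemma Cub_shiftT:
  assumes g: "g \<in> Cub" and s: "0 \<le> s"
  shows "shiftT s g \<in> Cub"
proof -
  have "uniformly_continuous_on {0..} (\<lambda>x. g (x + s))"
    by (rule uniformly_continuous_on_compose[OF uniformly_continuous_on_add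
          [OF uniformly_continuous_on_id uniformly_continuous_on_const]])
       (rule uniformly_continuous_on_subset[OF Cub_uniformly_continuous[OF g]], use s in auto)
  then have "uniformly_continuous_on {0..} (shiftT s g)"
    by (rule uniformly_continuous_on_cong[rotated]) (auto simp: shiftT_def)
  moreover obtain M where "\<And>x. \<bar>g x\<bar> \<le> M" using Cub_bound[OF g] by blast
  then have "bounded (shiftT s g ` {0..})"
    by (intro boundedI[of _ M]) (auto simp: shiftT_def)
  ultimately show ?thesis unfolding Cub_def by (auto simp: shiftT_def)
qed

lemma integral_lin_comb:
  fixes f g :: "real \<Rightarrow> real"
  assumes "f integrable_on S" "g integrable_on S"
  shows "integral S (\<lambda>x. a * f x + b * g x) = a * integral S f + b * integral S g"
proof -
  have "integral S (\<lambda>x. a *\<^sub>R f x + b *\<^sub>R g x) = integral S (\<lambda>x. a *\<^sub>R f x) + integral S (\<lambda>x. b *\<^sub>R g x)"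
    by (rule integral_add; rule integrable_cmul; rule assms)
  also have "\<dots> = a *\<^sub>R integral S f + b *\<^sub>R integral S g" by (simp only: integral_cmul)
  finally show ?thesis by simp
qed

lemma integral_shift_interval:
  fixes f :: "real \<Rightarrow> real"
  assumes "f integrable_on {a..b+s}" and "a \<le> b" and "0 \<le> s"
  shows "integral {a+s..b+s} f = integral {a..b} f + integral {b..b+s} f - integral {a..a+s} f"
proof -
  have "integral {a..b} f + integral {b..b+s} f = integral {a..b+s} f"
    by (rule Henstock_Kurzweil_Integration.integral_combine) (use assms in auto)
  moreover have "integral {a..a+s} f + integral {a+s..b+s} f = integral {a..b+s} f"
    by (rule Henstock_Kurzweil_Integration.integral_combine) (use assms in auto)
  ultimately show ?thesis by linarith
qed

lemma integral_eq_sum_subintervals: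
  fixes f :: "real \<Rightarrow> real"
  assumes f: "\<And>a b. f integrable_on {a..b}" and "0 \<le> d"
  shows "integral {a..a + real n * d} f = (\<Sum>j<n. integral {a + real j * d..a + real j * d + d} f)"
proof (induction n)
  case 0
  then show ?case by simp
next
  case (Suc n)
  have "integral {a..a + real n * d} f + integral {a + real n * d..a + real n * d + d} f
        = integral {a..a + real n * d + d} f"
    by (rule Henstock_Kurzweil_Integration.integral_combine) (use assms in \<open>auto simp: algebra_simps\<close>)
  then show ?case using Suc by (simp add: algebra_simps)
qed

lemma integral_approx_left_endpoint:
  fixes g :: "real \<Rightarrow> real"
  assumes "continuous_on {u..u+d} g" and "0 \<le> d" and "\<And>t. t \<in> {u..u+d} \<Longrightarrow> \<bar>g t - g u\<bar> \<le> e"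
  shows "\<bar>integral {u..u+d} g - d * g u\<bar> \<le> e * d"
proof -
  have gi: "g integrable_on {u..u+d}" using assms(1) integrable_continuous_interval by blast
  have "integral {u..u+d} (\<lambda>t. g t - g u) = integral {u..u+d} g - d * g u"
    using integral_diff[OF gi integrable_const_ivl[of "g u" u "u+d"]] assms(2) by simp
  moreover have "norm (integral {u..u+d} (\<lambda>t. g t - g u)) \<le> e * (u + d - u)"
    by (rule integral_bound) (use assms in \<open>auto intro!: continuous_intros\<close>)
  ultimately show ?thesis by simp
qed

lemma Linf_integral_shift_abs_le:
  assumes f: "f \<in> Linf" and B: "AE x in lebesgue. \<bar>f x\<bar> \<le> B" and "a \<le> b" and "0 \<le> s"
  shows "\<bar>integral {a+s..b+s} f - integral {a..b} f\<bar> \<le> 2 * B * s"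
proof -
  have "integral {a+s..b+s} f = integral {a..b} f + integral {b..b+s} f - integral {a..a+s} f"
    by (rule integral_shift_interval[OF Linf_integrable_on[OF f]]) (use assms in auto)
  moreover have "\<bar>integral {b..b+s} f\<bar> \<le> B * s" "\<bar>integral {a..a+s} f\<bar> \<le> B * s"
    using Linf_integral_abs_le[OF f B, of b "b+s"] Linf_integral_abs_le[OF f B, of a "a+s"] \<open>0 \<le> s\<close>
    by simp_all
  ultimately show ?thesis by linarith
qed

lemma Linf_primitive_diff:
  assumes "f \<in> Linf" and "0 \<le> u" and "u \<le> v"
  shows "integral {0..v} f - integral {0..u} f = integral {u..v} f"
proof -
  have "integral {0..u} f + integral {u..v} f = integral {0..v} f"
    by (rule Henstock_Kurzweil_Integration.integral_combine)
       (use assms Linf_integrable_on[OF assms(1)] in auto)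
  then show ?thesis by linarith
qed

lemma Linf_primitive_lipschitz:
  assumes f: "f \<in> Linf" and "0 \<le> B" and B: "AE x in lebesgue. \<bar>f x\<bar> \<le> B"
  shows "B-lipschitz_on {0..} (\<lambda>u. integral {0..u} f)"
proof (rule lipschitz_onI)
  have le: "\<bar>integral {0..v} f - integral {0..u} f\<bar> \<le> B * (v - u)" if "0 \<le> u" "u \<le> v" for u v
    using Linf_primitive_diff[OF f that] Linf_integral_abs_le[OF f B that(2)] by simp
  show "dist (integral {0..u} f) (integral {0..v} f) \<le> B * dist u v"
    if "u \<in> {0..}" "v \<in> {0..}" for u v
    using le[of u v] le[of v u] that by (cases "u \<le> v") (auto simp: dist_real_def abs_minus_commute)
qed fact

section \<open>The unit moving average\<close>

definition unit_avg :: "(real \<Rightarrow> real) \<Rightarrow> real \<Rightarrow> real" where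
  "unit_avg f x = (if 0 \<le> x then integral {x..x+1} f else 0)"

lemma unit_avg_Cub:
  assumes f: "f \<in> Linf"
  shows "unit_avg f \<in> Cub"
proof -
  obtain B where "0 \<le> B" and B: "AE x in lebesgue. \<bar>f x\<bar> \<le> B" using Linf_AE_bound[OF f] .
  have lip: "\<bar>unit_avg f y - unit_avg f x\<bar> \<le> 2 * B * (y - x)" if "0 \<le> x" "x \<le> y" for x y
    using Linf_integral_shift_abs_le[OF f B, of x "x+1" "y - x"] that
    by (simp add: unit_avg_def algebra_simps)
  have "(2*B)-lipschitz_on {0..} (unit_avg f)"
  proof (rule lipschitz_onI)
    fix x y :: real assume "x \<in> {0..}" "y \<in> {0..}"
    then show "dist (unit_avg f x) (unit_avg f y) \<le> 2 * B * dist x y"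
      using lip[of x y] lip[of y x] by (cases "x \<le> y") (auto simp: dist_real_def abs_minus_commute)
  qed (use \<open>0 \<le> B\<close> in simp)
  then have "uniformly_continuous_on {0..} (unit_avg f)" by (rule lipschitz_on_uniformly_continuous)
  moreover have "bounded (unit_avg f ` {0..})"
  proof (rule boundedI[of _ B])
    fix y assume "y \<in> unit_avg f ` {0..}"
    then obtain x where "0 \<le> x" "y = unit_avg f x" by auto
    then show "norm y \<le> B" using Linf_integral_abs_le[OF f B, of x "x+1"] by (simp add: unit_avg_def)
  qed
  ultimately show ?thesis unfolding Cub_def by (auto simp: unit_avg_def)
qed

lemma unit_avg_lin_comb:
  assumes "f \<in> Linf" and "g \<in> Linf"
  shows "unit_avg (\<lambda>x. a * f x + b * g x) = (\<lambda>x. a * unit_avg f x + b * unit_avg g x)"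
  using integral_lin_comb[OF Linf_integrable_on[OF assms(1)] Linf_integrable_on[OF assms(2)]]
  by (simp add: unit_avg_def fun_eq_iff)

lemma unit_avg_one_plus: "unit_avg one_plus = one_plus"
proof
  fix x
  have "0 \<le> x \<Longrightarrow> integral {x..x+1} one_plus = integral {x..x+1} (\<lambda>_. 1::real)"
    by (intro integral_cong) (auto simp: one_plus_def)
  then show "unit_avg one_plus x = one_plus x" by (simp add: unit_avg_def one_plus_def)
qed

lemma unit_avg_nonneg:
  assumes "f \<in> Linf" and "AE x in lebesgue. 0 \<le> x \<longrightarrow> 0 \<le> f x"
  shows "0 \<le> unit_avg f x"
  using Linf_integral_nonneg[OF assms] by (simp add: unit_avg_def)

text \<open>With \<open>G\<close> the primitive of \<open>f\<close>, the integral of \<^term>\<open>unit_avg f\<close> over \<open>[x, x + \<theta>]\<close>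
  telescopes to the difference of the means of \<open>G\<close> over \<open>[x + \<theta>, x + \<theta> + 1]\<close> and \<open>[x, x + 1]\<close>,
  and each of these is within \<open>B\<close> of the value of \<open>G\<close> at the left endpoint.\<close>

lemma Linf_window_integral_unit_avg:
  assumes f: "f \<in> Linf" and "0 \<le> B" and B: "AE x in lebesgue. \<bar>f x\<bar> \<le> B"
    and x: "0 \<le> x" and th: "0 \<le> \<theta>"
  shows "\<bar>integral {x..x+\<theta>} f - integral {x..x+\<theta>} (unit_avg f)\<bar> \<le> 2 * B"
proof -
  define G where "G u = integral {0..u} f" for u
  have Gdiff: "G v - G u = integral {u..v} f" if "0 \<le> u" "u \<le> v" for u v
    unfolding G_def using Linf_primitive_diff[OF f that] .
  have lip: "B-lipschitz_on {0..} G"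
    unfolding G_def using Linf_primitive_lipschitz[OF f \<open>0 \<le> B\<close> B] .
  have Gc: "continuous_on {a..b} G" if "0 \<le> a" for a b
    by (rule continuous_on_subset[OF lipschitz_on_continuous_on[OF lip]]) (use that in auto)
  have Gi: "G integrable_on {a..b}" if "0 \<le> a" for a b
    using Gc[OF that] integrable_continuous_interval by blast
  have "integral {x..x+\<theta>} (unit_avg f) = integral {x..x+\<theta>} (\<lambda>u. G (u + 1) - G u)"
    by (rule integral_cong) (use x Gdiff in \<open>auto simp: unit_avg_def\<close>)
  also have "\<dots> = integral {x..x+\<theta>} (\<lambda>u. G (u + 1)) - integral {x..x+\<theta>} G"
    by (rule integral_diff[OF _ Gi])
       (use integrable_shift_real_ivl[OF Gi[of "x+1" "x+\<theta>+1"], of 1] x in simp_all)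
  also have "integral {x..x+\<theta>} (\<lambda>u. G (u + 1)) = integral {x+1..x+\<theta>+1} G"
    using integral_shift_real_ivl[of "x+1" 1 "x+\<theta>+1" G] by simp
  also have "\<dots> = integral {x..x+\<theta>} G + integral {x+\<theta>..x+\<theta>+1} G - integral {x..x+1} G"
    by (rule integral_shift_interval[OF Gi]) (use x th in auto)
  finally have avg: "integral {x..x+\<theta>} (unit_avg f) = integral {x+\<theta>..x+\<theta>+1} G - integral {x..x+1} G"
    by simp
  have piece: "\<bar>integral {u..u+1} G - 1 * G u\<bar> \<le> B * 1" if u: "0 \<le> u" for u
  proof (rule integral_approx_left_endpoint[OF Gc[OF u]])
    fix t assume "t \<in> {u..u+1}"
    then show "\<bar>G t - G u\<bar> \<le> B"
      using lipschitz_onD[OF lip, of t u] u \<open>0 \<le> B\<close>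
      by (auto simp: dist_real_def intro: order.trans[OF _ mult_left_le])
  qed simp
  have "integral {x..x+\<theta>} f = G (x+\<theta>) - G x" using Gdiff[of x "x+\<theta>"] x th by simp
  then show ?thesis using piece[OF x] piece[of "x+\<theta>"] x th unfolding avg by simp
qed

lemma mean_Cub_lin_comb:
  "mean_Cub \<psi> \<Longrightarrow> f \<in> Cub \<Longrightarrow> g \<in> Cub \<Longrightarrow> \<psi> (\<lambda>x. a * f x + b * g x) = a * \<psi> f + b * \<psi> g"
  unfolding mean_Cub_def lin_on_def by blast

lemma mean_Cub_nonneg: "mean_Cub \<psi> \<Longrightarrow> f \<in> Cub \<Longrightarrow> (\<And>x. 0 \<le> x \<Longrightarrow> 0 \<le> f x) \<Longrightarrow> 0 \<le> \<psi> f"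
  unfolding mean_Cub_def by blast

lemma mean_Cub_one_plus: "mean_Cub \<psi> \<Longrightarrow> \<psi> one_plus = 1"
  unfolding mean_Cub_def by blast

lemma mean_Cub_sum:
  fixes n :: nat
  assumes \<psi>: "mean_Cub \<psi>" and h: "\<And>j. j < n \<Longrightarrow> h j \<in> Cub"
  shows "\<psi> (\<lambda>x. \<Sum>j<n. c j * h j x) = (\<Sum>j<n. c j * \<psi> (h j))"
  using h
proof (induction n)
  case 0
  then show ?case using mean_Cub_lin_comb[OF \<psi> one_plus_Cub one_plus_Cub, of 0 0] by simp
next
  case (Suc n)
  have "\<psi> (\<lambda>x. 1 * (\<Sum>j<n. c j * h j x) + c n * h n x)
        = 1 * \<psi> (\<lambda>x. \<Sum>j<n. c j * h j x) + c n * \<psi> (h n)"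
    by (rule mean_Cub_lin_comb[OF \<psi>]) (use Suc.prems in \<open>auto intro!: Cub_sum\<close>)
  then show ?case using Suc by simp
qed

lemma mean_Cub_abs_le:
  assumes \<psi>: "mean_Cub \<psi>" and h: "h \<in> Cub" and M: "\<And>x. 0 \<le> x \<Longrightarrow> \<bar>h x\<bar> \<le> M"
  shows "\<bar>\<psi> h\<bar> \<le> M"
proof -
  have "0 \<le> \<psi> (\<lambda>x. M * one_plus x + c * h x)" if "c = 1 \<or> c = -1" for c
    by (rule mean_Cub_nonneg[OF \<psi> Cub_lin_comb[OF one_plus_Cub h]])
       (use M that in \<open>force simp: one_plus_def\<close>)
  then show ?thesis
    using mean_Cub_lin_comb[OF \<psi> one_plus_Cub h, of M] mean_Cub_one_plus[OF \<psi>]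
    by (fastforce simp: abs_le_iff)
qed

lemma Mtau_mean_Cub: "\<psi> \<in> Mtau \<Longrightarrow> mean_Cub \<psi>"
  unfolding Mtau_def by blast

lemma Mtau_shiftT_invariant: "\<psi> \<in> Mtau \<Longrightarrow> 0 \<le> s \<Longrightarrow> f \<in> Cub \<Longrightarrow> \<psi> (shiftT s f) = \<psi> f"
  unfolding Mtau_def by blast

lemma Mtau_le_if_eventually_le:
  assumes \<psi>: "\<psi> \<in> Mtau" and h: "h \<in> Cub" and "0 \<le> s" and c: "\<And>x. s \<le> x \<Longrightarrow> h x \<le> c"
  shows "\<psi> h \<le> c"
proof -
  have m: "mean_Cub \<psi>" using Mtau_mean_Cub[OF \<psi>] .
  have hs: "shiftT s h \<in> Cub" using Cub_shiftT[OF h \<open>0 \<le> s\<close>] .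
  have "0 \<le> \<psi> (\<lambda>x. c * one_plus x + (-1) * shiftT s h x)"
    by (rule mean_Cub_nonneg[OF m Cub_lin_comb[OF one_plus_Cub hs]])
       (use c \<open>0 \<le> s\<close> in \<open>auto simp: one_plus_def shiftT_def\<close>)
  then show ?thesis
    using mean_Cub_lin_comb[OF m one_plus_Cub hs, of c "-1"] mean_Cub_one_plus[OF m]
      Mtau_shiftT_invariant[OF \<psi> \<open>0 \<le> s\<close> h]
    by simp
qed

lemma Mtau_average_of_shifts:
  assumes \<psi>: "\<psi> \<in> Mtau" and g: "g \<in> Cub" and "0 \<le> d" and "0 < n"
  shows "\<psi> (\<lambda>x. \<Sum>j<n. (1 / real n) * shiftT (real j * d) g x) = \<psi> g"
proof -
  have "\<psi> (\<lambda>x. \<Sum>j<n. (1 / real n) * shiftT (real j * d) g x)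
        = (\<Sum>j<n. (1 / real n) * \<psi> (shiftT (real j * d) g))"
    by (rule mean_Cub_sum[OF Mtau_mean_Cub[OF \<psi>]]) (use Cub_shiftT[OF g] \<open>0 \<le> d\<close> in simp)
  also have "\<dots> = \<psi> g"
    using Mtau_shiftT_invariant[OF \<psi> _ g] \<open>0 \<le> d\<close> \<open>0 < n\<close> by simp
  finally show ?thesis .
qed

lemma unit_avg_uniform_Riemann_approx:
  assumes g: "g \<in> Cub" and "0 < e"
  obtains m :: nat where "0 < m"
    and "\<And>x. 0 \<le> x \<Longrightarrow> \<bar>unit_avg g x - (\<Sum>j<m. (1 / real m) * shiftT (real j / real m) g x)\<bar> \<le> e"
proof -
  have uc: "uniformly_continuous_on {0..} g" using Cub_uniformly_continuous[OF g] .
  obtain \<delta> where "\<delta> > 0"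
    and \<delta>: "\<And>x x'. x \<in> {0..} \<Longrightarrow> x' \<in> {0..} \<Longrightarrow> dist x' x < \<delta> \<Longrightarrow> dist (g x') (g x) < e"
    using uc \<open>0 < e\<close> unfolding uniformly_continuous_on_def by metis
  obtain m :: nat where m: "0 < m" "inverse (real m) < \<delta>"
    using ex_inverse_of_nat_less[OF \<open>\<delta> > 0\<close>] by auto
  define d where "d = 1 / real m"
  have "0 < d" "d < \<delta>" "real m * d = 1" using m by (simp_all add: d_def inverse_eq_divide)
  have "\<bar>unit_avg g x - (\<Sum>j<m. d * shiftT (real j * d) g x)\<bar> \<le> e" if x: "0 \<le> x" for x
  proof -
    let ?u = "\<lambda>j::nat. x + real j * d"
    have avg: "unit_avg g x = (\<Sum>j<m. integral {?u j..?u j + d} g)"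
      using integral_eq_sum_subintervals[OF Linf_integrable_on[OF subsetD[OF Cub_subset_Linf g]],
          of d x m] x \<open>0 < d\<close> \<open>real m * d = 1\<close>
      by (simp add: unit_avg_def)
    have piece: "\<bar>integral {?u j..?u j + d} g - d * g (?u j)\<bar> \<le> e * d" for j
    proof (rule integral_approx_left_endpoint)
      have "0 \<le> real j * d" using \<open>0 < d\<close> by simp
      then show "continuous_on {?u j..?u j + d} g"
        by (intro continuous_on_subset[OF uniformly_continuous_imp_continuous[OF uc]])
           (use x in auto)
      fix t assume "t \<in> {?u j..?u j + d}"
      then show "\<bar>g t - g (?u j)\<bar> \<le> e"
        using \<delta>[of "?u j" t] x \<open>0 \<le> real j * d\<close> \<open>d < \<delta>\<close> by (auto simp: dist_real_def)
    qed (use \<open>0 < d\<close> in simp)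
    have "\<bar>unit_avg g x - (\<Sum>j<m. d * shiftT (real j * d) g x)\<bar>
          = \<bar>\<Sum>j<m. integral {?u j..?u j + d} g - d * g (?u j)\<bar>"
      using x unfolding avg by (simp add: shiftT_def sum_subtractf)
    also have "\<dots> \<le> (\<Sum>j<m. \<bar>integral {?u j..?u j + d} g - d * g (?u j)\<bar>)"
      by (rule sum_abs)
    also have "\<dots> \<le> real m * (e * d)"
      using sum_bounded_above[of "{..<m}", OF piece] by simp
    also have "\<dots> = e" using \<open>real m * d = 1\<close> by (simp add: algebra_simps)
    finally show ?thesis .
  qed
  then show ?thesis using that[OF m(1)] by (simp add: d_def)
qed

lemma Mtau_unit_avg:
  assumes \<psi>: "\<psi> \<in> Mtau" and g: "g \<in> Cub"
  shows "\<psi> (unit_avg g) = \<psi> g"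
proof -
  have m: "mean_Cub \<psi>" using Mtau_mean_Cub[OF \<psi>] .
  have Ag: "unit_avg g \<in> Cub" using unit_avg_Cub subsetD[OF Cub_subset_Linf g] by blast
  have close: "\<bar>\<psi> (unit_avg g) - \<psi> g\<bar> \<le> e" if "0 < e" for e
  proof -
    obtain m :: nat where "0 < m" and approx:
      "\<And>x. 0 \<le> x \<Longrightarrow> \<bar>unit_avg g x - (\<Sum>j<m. (1 / real m) * shiftT (real j / real m) g x)\<bar> \<le> e"
      using unit_avg_uniform_Riemann_approx[OF g \<open>0 < e\<close>] by blast
    define R where "R x = (\<Sum>j<m. (1 / real m) * shiftT (real j * (1 / real m)) g x)" for x
    have R: "R \<in> Cub" unfolding R_def by (rule Cub_sum) (use Cub_shiftT[OF g] in simp)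
    have "\<psi> R = \<psi> g"
      unfolding R_def by (rule Mtau_average_of_shifts[OF \<psi> g _ \<open>0 < m\<close>]) simp
    moreover have "\<bar>\<psi> (\<lambda>x. 1 * unit_avg g x + (-1) * R x)\<bar> \<le> e"
      by (rule mean_Cub_abs_le[OF m Cub_lin_comb[OF Ag R]]) (use approx in \<open>simp add: R_def\<close>)
    ultimately show ?thesis using mean_Cub_lin_comb[OF m Ag R, of 1 "-1"] by simp
  qed
  have "\<bar>\<psi> (unit_avg g) - \<psi> g\<bar> \<le> 0"
    by (rule field_le_epsilon) (simp add: close)
  then show ?thesis by simp
qed

section \<open>Window averages and the upper mean\<close>

definition window_limsup :: "(real \<Rightarrow> real) \<Rightarrow> real \<Rightarrow> ereal" where
  "window_limsup f \<theta> = Limsup at_top (\<lambda>x. ereal ((1 / \<theta>) * integral {x..x+\<theta>} f))"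

lemma upper_M1_eq_Lim_window_limsup: "f \<in> Linf \<Longrightarrow> upper_M1 f = Lim at_top (window_limsup f)"
  unfolding upper_M1_def window_limsup_def by (simp add: Linf_LINT_eq_integral)

lemma window_limsup_bounds:
  assumes "0 < \<theta>" and C: "\<And>x. 0 \<le> x \<Longrightarrow> \<bar>integral {x..x+\<theta>} f\<bar> \<le> C"
  shows "ereal (- (C / \<theta>)) \<le> window_limsup f \<theta>" and "window_limsup f \<theta> \<le> ereal (C / \<theta>)"
proof -
  have ev: "\<forall>\<^sub>F x in at_top. - (C / \<theta>) \<le> (1 / \<theta>) * integral {x..x+\<theta>} f
                              \<and> (1 / \<theta>) * integral {x..x+\<theta>} f \<le> C / \<theta>"
    using eventually_ge_at_top[of "0::real"]
  proof eventually_elim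
    case (elim x)
    have "\<bar>(1 / \<theta>) * integral {x..x+\<theta>} f\<bar> \<le> C / \<theta>"
      using C[OF elim] \<open>0 < \<theta>\<close> by (simp add: abs_mult divide_right_mono)
    then show ?case unfolding abs_le_iff by linarith
  qed
  show "ereal (- (C / \<theta>)) \<le> window_limsup f \<theta>" unfolding window_limsup_def
    by (rule le_Limsup) (use ev in \<open>auto elim: eventually_mono\<close>)
  show "window_limsup f \<theta> \<le> ereal (C / \<theta>)" unfolding window_limsup_def
    by (rule Limsup_bounded) (use ev in \<open>auto elim: eventually_mono\<close>)
qed

lemma window_limsup_finite:
  assumes f: "f \<in> Linf" and "0 < \<theta>"
  obtains l where "window_limsup f \<theta> = ereal l"
proof -
  obtain B where B: "AE x in lebesgue. \<bar>f x\<bar> \<le> B" using Linf_AE_bound[OF f] by blast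
  have "\<bar>integral {x..x+\<theta>} f\<bar> \<le> B * \<theta>" for x
    using Linf_integral_abs_le[OF f B, of x "x+\<theta>"] \<open>0 < \<theta>\<close> by simp
  then have "ereal (- (B * \<theta> / \<theta>)) \<le> window_limsup f \<theta>" "window_limsup f \<theta> \<le> ereal (B * \<theta> / \<theta>)"
    using window_limsup_bounds[OF \<open>0 < \<theta>\<close>] by blast+
  then show ?thesis using that by (cases "window_limsup f \<theta>") auto
qed

lemma upper_M1_eq_0_if_bounded_windows:
  assumes d: "d \<in> Linf" and C: "\<And>x \<theta>. 0 \<le> x \<Longrightarrow> 0 < \<theta> \<Longrightarrow> \<bar>integral {x..x+\<theta>} d\<bar> \<le> C"
  shows "upper_M1 d = 0"
proof -
  have lim: "((\<lambda>\<theta>::real. C / \<theta>) \<longlongrightarrow> 0) at_top"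
    by (rule tendsto_divide_0[OF tendsto_const filterlim_at_top_imp_at_infinity[OF filterlim_ident]])
  have "(window_limsup d \<longlongrightarrow> ereal 0) at_top"
  proof (rule tendsto_sandwich[of "\<lambda>\<theta>. ereal (- (C / \<theta>))" _ _ "\<lambda>\<theta>. ereal (C / \<theta>)"])
    show "\<forall>\<^sub>F \<theta> in at_top. ereal (- (C / \<theta>)) \<le> window_limsup d \<theta>"
      using eventually_gt_at_top[of "0::real"]
      by eventually_elim (rule window_limsup_bounds(1), use C in auto)
    show "\<forall>\<^sub>F \<theta> in at_top. window_limsup d \<theta> \<le> ereal (C / \<theta>)"
      using eventually_gt_at_top[of "0::real"]
      by eventually_elim (rule window_limsup_bounds(2), use C in auto)
    show "((\<lambda>\<theta>. ereal (- (C / \<theta>))) \<longlongrightarrow> ereal 0) at_top"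
      using tendsto_ereal[OF tendsto_minus[OF lim]] by simp
    show "((\<lambda>\<theta>. ereal (C / \<theta>)) \<longlongrightarrow> ereal 0) at_top"
      using tendsto_ereal[OF lim] .
  qed
  then show ?thesis unfolding upper_M1_eq_Lim_window_limsup[OF d] by (simp add: tendsto_Lim)
qed

text \<open>Cover \<open>[x, x + \<theta>]\<close> by \<open>\<lceil>\<theta> / \<theta>\<^sub>0\<rceil>\<close> consecutive windows of length \<open>\<theta>\<^sub>0\<close>; the overshoot is
  shorter than \<open>\<theta>\<^sub>0\<close>.\<close>

lemma Linf_window_integral_le:
  assumes f: "f \<in> Linf" and "0 \<le> B" and B: "AE x in lebesgue. \<bar>f x\<bar> \<le> B"
    and "0 < \<theta>\<^sub>0" and "\<theta>\<^sub>0 \<le> \<theta>"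
    and short: "\<And>y. X \<le> y \<Longrightarrow> integral {y..y+\<theta>\<^sub>0} f \<le> \<theta>\<^sub>0 * c" and "X \<le> x"
  shows "integral {x..x+\<theta>} f \<le> \<theta> * c + (\<bar>c\<bar> + B) * \<theta>\<^sub>0"
proof -
  define k where "k = nat \<lceil>\<theta> / \<theta>\<^sub>0\<rceil>"
  have "real k = of_int \<lceil>\<theta> / \<theta>\<^sub>0\<rceil>"
    using \<open>0 < \<theta>\<^sub>0\<close> \<open>\<theta>\<^sub>0 \<le> \<theta>\<close> by (simp add: k_def)
  then have "\<theta> / \<theta>\<^sub>0 \<le> real k" "real k < \<theta> / \<theta>\<^sub>0 + 1" by linarith+
  then have k: "\<theta> \<le> real k * \<theta>\<^sub>0" "real k * \<theta>\<^sub>0 < \<theta> + \<theta>\<^sub>0"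
    using \<open>0 < \<theta>\<^sub>0\<close> by (simp_all add: field_simps)
  have "integral {x..x + real k * \<theta>\<^sub>0} f = (\<Sum>j<k. integral {x + real j * \<theta>\<^sub>0..x + real j * \<theta>\<^sub>0 + \<theta>\<^sub>0} f)"
    by (rule integral_eq_sum_subintervals[OF Linf_integrable_on[OF f]]) (use \<open>0 < \<theta>\<^sub>0\<close> in simp)
  also have "\<dots> \<le> real (card {..<k}) * (\<theta>\<^sub>0 * c)"
  proof (rule sum_bounded_above)
    fix j assume "j \<in> {..<k}"
    have "X \<le> x + real j * \<theta>\<^sub>0" using \<open>X \<le> x\<close> \<open>0 < \<theta>\<^sub>0\<close> by (simp add: add_increasing2)
    then show "integral {x + real j * \<theta>\<^sub>0..x + real j * \<theta>\<^sub>0 + \<theta>\<^sub>0} f \<le> \<theta>\<^sub>0 * c" by (rule short)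
  qed
  finally have long: "integral {x..x + real k * \<theta>\<^sub>0} f \<le> real k * \<theta>\<^sub>0 * c" by simp
  have "integral {x..x+\<theta>} f + integral {x+\<theta>..x + real k * \<theta>\<^sub>0} f = integral {x..x + real k * \<theta>\<^sub>0} f"
    by (rule Henstock_Kurzweil_Integration.integral_combine)
       (use \<open>0 < \<theta>\<^sub>0\<close> \<open>\<theta>\<^sub>0 \<le> \<theta>\<close> k Linf_integrable_on[OF f] in auto)
  moreover have "\<bar>integral {x+\<theta>..x + real k * \<theta>\<^sub>0} f\<bar> \<le> B * \<theta>\<^sub>0"
    using Linf_integral_abs_le[OF f B, of "x+\<theta>" "x + real k * \<theta>\<^sub>0"] k
      mult_left_mono[of "real k * \<theta>\<^sub>0 - \<theta>" \<theta>\<^sub>0 B] \<open>0 \<le> B\<close> by simp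
  moreover have "(real k * \<theta>\<^sub>0 - \<theta>) * c \<le> \<theta>\<^sub>0 * \<bar>c\<bar>"
  proof -
    have "(real k * \<theta>\<^sub>0 - \<theta>) * c \<le> (real k * \<theta>\<^sub>0 - \<theta>) * \<bar>c\<bar>"
      by (rule mult_left_mono) (use k in auto)
    also have "\<dots> \<le> \<theta>\<^sub>0 * \<bar>c\<bar>"
      by (rule mult_right_mono) (use k in auto)
    finally show ?thesis .
  qed
  ultimately show ?thesis using long by (simp add: algebra_simps)
qed

lemma Limsup_window_limsup_le:
  assumes f: "f \<in> Linf" and "0 < \<theta>\<^sub>0"
  shows "Limsup at_top (window_limsup f) \<le> window_limsup f \<theta>\<^sub>0"
proof (rule ereal_le_epsilon2)
  fix e :: real assume "0 < e"
  obtain B where "0 \<le> B" and B: "AE x in lebesgue. \<bar>f x\<bar> \<le> B" using Linf_AE_bound[OF f] .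
  obtain l where l: "window_limsup f \<theta>\<^sub>0 = ereal l" using window_limsup_finite[OF f \<open>0 < \<theta>\<^sub>0\<close>] .
  define c where "c = l + e"
  have "window_limsup f \<theta>\<^sub>0 < ereal c" using l \<open>0 < e\<close> by (simp add: c_def)
  then have "\<forall>\<^sub>F y in at_top. ereal ((1 / \<theta>\<^sub>0) * integral {y..y+\<theta>\<^sub>0} f) < ereal c"
    unfolding window_limsup_def by (rule Limsup_lessD)
  then obtain X where "\<And>y. X \<le> y \<Longrightarrow> (1 / \<theta>\<^sub>0) * integral {y..y+\<theta>\<^sub>0} f < c"
    unfolding eventually_at_top_linorder by auto
  then have short: "\<And>y. X \<le> y \<Longrightarrow> integral {y..y+\<theta>\<^sub>0} f \<le> \<theta>\<^sub>0 * c"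
    using \<open>0 < \<theta>\<^sub>0\<close> by (fastforce simp: field_simps)
  have bound: "window_limsup f \<theta> \<le> ereal (c + (\<bar>c\<bar> + B) * \<theta>\<^sub>0 / \<theta>)" if "\<theta>\<^sub>0 \<le> \<theta>" for \<theta>
    unfolding window_limsup_def
  proof (rule Limsup_bounded, unfold eventually_at_top_linorder, intro exI allI impI)
    fix x assume "X \<le> x"
    have "integral {x..x+\<theta>} f \<le> \<theta> * c + (\<bar>c\<bar> + B) * \<theta>\<^sub>0"
      by (rule Linf_window_integral_le[OF f \<open>0 \<le> B\<close> B \<open>0 < \<theta>\<^sub>0\<close> that short \<open>X \<le> x\<close>])
    then show "ereal ((1 / \<theta>) * integral {x..x+\<theta>} f) \<le> ereal (c + (\<bar>c\<bar> + B) * \<theta>\<^sub>0 / \<theta>)"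
      using \<open>0 < \<theta>\<^sub>0\<close> that by (simp add: field_simps)
  qed
  have "((\<lambda>\<theta>::real. c + (\<bar>c\<bar> + B) * \<theta>\<^sub>0 / \<theta>) \<longlongrightarrow> c + 0) at_top"
    by (intro tendsto_add tendsto_const tendsto_divide_0[OF tendsto_const
          filterlim_at_top_imp_at_infinity[OF filterlim_ident]])
  then have "Limsup at_top (\<lambda>\<theta>. ereal (c + (\<bar>c\<bar> + B) * \<theta>\<^sub>0 / \<theta>)) = ereal c"
    by (intro lim_imp_Limsup) (simp_all add: tendsto_ereal)
  moreover have "Limsup at_top (window_limsup f) \<le> Limsup at_top (\<lambda>\<theta>. ereal (c + (\<bar>c\<bar> + B) * \<theta>\<^sub>0 / \<theta>))"
    by (rule Limsup_mono) (use bound in \<open>auto simp: eventually_at_top_linorder\<close>)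
  ultimately show "Limsup at_top (window_limsup f) \<le> window_limsup f \<theta>\<^sub>0 + ereal e"
    using l by (simp add: c_def)
qed

text \<open>\<^const>\<open>upper_M1\<close> is defined through \<^const>\<open>Lim\<close>, which is meaningful only because
  this limit exists.\<close>

lemma window_limsup_tendsto:
  assumes f: "f \<in> Linf"
  shows "(window_limsup f \<longlongrightarrow> Limsup at_top (window_limsup f)) at_top"
proof (rule Liminf_eq_Limsup)
  have "Limsup at_top (window_limsup f) \<le> Liminf at_top (window_limsup f)"
    by (rule Liminf_bounded)
       (use Limsup_window_limsup_le[OF f] in \<open>auto simp: eventually_at_top_linorder intro!: exI[of _ 1]\<close>)
  then show "Liminf at_top (window_limsup f) = Limsup at_top (window_limsup f)"
    using Liminf_le_Limsup[of at_top "window_limsup f"] by simp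
qed simp_all

lemma upper_M1_eq_Limsup_window_limsup:
  "f \<in> Linf \<Longrightarrow> upper_M1 f = Limsup at_top (window_limsup f)"
  using upper_M1_eq_Lim_window_limsup tendsto_Lim[OF _ window_limsup_tendsto] by simp

section \<open>Means dominated by the upper mean\<close>

lemma M1_mean_Linf: "\<phi> \<in> M1 \<Longrightarrow> mean_Linf \<phi>"
  unfolding M1_def by blast

lemma M1_le_upper_M1: "\<phi> \<in> M1 \<Longrightarrow> f \<in> Linf \<Longrightarrow> ereal (\<phi> f) \<le> upper_M1 f"
  unfolding M1_def by blast

lemma mean_Linf_lin_comb:
  "mean_Linf \<phi> \<Longrightarrow> f \<in> Linf \<Longrightarrow> g \<in> Linf \<Longrightarrow> \<phi> (\<lambda>x. a * f x + b * g x) = a * \<phi> f + b * \<phi> g"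
  unfolding mean_Linf_def lin_on_def by blast

lemma M1_eq_0_if_bounded_windows:
  assumes \<phi>: "\<phi> \<in> M1" and d: "d \<in> Linf"
    and C: "\<And>x \<theta>. 0 \<le> x \<Longrightarrow> 0 < \<theta> \<Longrightarrow> \<bar>integral {x..x+\<theta>} d\<bar> \<le> C"
  shows "\<phi> d = 0"
proof -
  let ?neg = "\<lambda>x. (-1) * d x + 0 * d x"
  have neg: "?neg \<in> Linf" using Linf_lin_comb[OF d d] .
  have "\<bar>integral {x..x+\<theta>} ?neg\<bar> \<le> C" if "0 \<le> x" "0 < \<theta>" for x \<theta>
    using C[OF that] integral_lin_comb[OF Linf_integrable_on[OF d] Linf_integrable_on[OF d], of _ _ "-1" 0]
    by simp
  then have "upper_M1 ?neg = 0" by (rule upper_M1_eq_0_if_bounded_windows[OF neg])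
  then have "ereal (\<phi> ?neg) \<le> 0" using M1_le_upper_M1[OF \<phi> neg] by simp
  moreover have "ereal (\<phi> d) \<le> 0"
    using M1_le_upper_M1[OF \<phi> d] upper_M1_eq_0_if_bounded_windows[OF d C] by simp
  ultimately show ?thesis using mean_Linf_lin_comb[OF M1_mean_Linf[OF \<phi>] d d, of "-1" 0] by simp
qed

lemma M1_eq_if_bounded_window_diff:
  assumes \<phi>: "\<phi> \<in> M1" and f: "f \<in> Linf" and g: "g \<in> Linf"
    and C: "\<And>x \<theta>. 0 \<le> x \<Longrightarrow> 0 < \<theta> \<Longrightarrow> \<bar>integral {x..x+\<theta>} f - integral {x..x+\<theta>} g\<bar> \<le> C"
  shows "\<phi> f = \<phi> g"
proof -
  have "\<phi> (\<lambda>x. 1 * f x + (-1) * g x) = 0"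
  proof (rule M1_eq_0_if_bounded_windows[OF \<phi> Linf_lin_comb[OF f g]])
    fix x \<theta> :: real assume "0 \<le> x" "0 < \<theta>"
    then show "\<bar>integral {x..x+\<theta>} (\<lambda>x. 1 * f x + (-1) * g x)\<bar> \<le> C"
      using C integral_lin_comb[OF Linf_integrable_on[OF f] Linf_integrable_on[OF g], of _ _ 1 "-1"]
      by simp
  qed
  then show ?thesis using mean_Linf_lin_comb[OF M1_mean_Linf[OF \<phi>] f g, of 1 "-1"] by simp
qed

lemma M1_shiftT_invariant:
  assumes \<phi>: "\<phi> \<in> M1" and g: "g \<in> Cub" and "0 \<le> s"
  shows "\<phi> (shiftT s g) = \<phi> g"
proof -
  have gL: "g \<in> Linf" using Cub_subset_Linf g by blast
  obtain B where B: "AE x in lebesgue. \<bar>g x\<bar> \<le> B" using Linf_AE_bound[OF gL] by blast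
  show ?thesis
  proof (rule M1_eq_if_bounded_window_diff[OF \<phi> _ gL])
    show "shiftT s g \<in> Linf" using Cub_shiftT[OF g \<open>0 \<le> s\<close>] Cub_subset_Linf by blast
    fix x \<theta> :: real assume "0 \<le> x" "0 < \<theta>"
    have "integral {x..x+\<theta>} (shiftT s g) = integral {x..x+\<theta>} (\<lambda>t. g (t + s))"
      by (rule integral_cong) (use \<open>0 \<le> x\<close> in \<open>auto simp: shiftT_def\<close>)
    also have "\<dots> = integral {x+s..x+\<theta>+s} g"
      using integral_shift_real_ivl[of "x+s" s "x+\<theta>+s" g] by simp
    finally show "\<bar>integral {x..x+\<theta>} (shiftT s g) - integral {x..x+\<theta>} g\<bar> \<le> 2 * B * s"
      using Linf_integral_shift_abs_le[OF gL B, of x "x+\<theta>" s] \<open>0 < \<theta>\<close> \<open>0 \<le> s\<close>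
      by (simp add: add.commute add.left_commute)
  qed
qed

lemma M1_unit_avg:
  assumes \<phi>: "\<phi> \<in> M1" and f: "f \<in> Linf"
  shows "\<phi> (unit_avg f) = \<phi> f"
proof -
  obtain B where "0 \<le> B" and B: "AE x in lebesgue. \<bar>f x\<bar> \<le> B" using Linf_AE_bound[OF f] .
  have "\<phi> f = \<phi> (unit_avg f)"
    by (rule M1_eq_if_bounded_window_diff[OF \<phi> f subsetD[OF Cub_subset_Linf unit_avg_Cub[OF f]], where C = "2 * B"])
       (use Linf_window_integral_unit_avg[OF f \<open>0 \<le> B\<close> B] in auto)
  then show ?thesis by simp
qed

section \<open>Invariant means are dominated by the upper mean\<close>

lemma Mtau_unit_avg_le_window_limsup:
  assumes \<psi>: "\<psi> \<in> Mtau" and f: "f \<in> Linf" and "0 < n"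
  shows "ereal (\<psi> (unit_avg f)) \<le> window_limsup f (real n)"
proof (rule ereal_le_epsilon2)
  fix e :: real assume "0 < e"
  obtain l where l: "window_limsup f (real n) = ereal l"
    using window_limsup_finite[OF f] \<open>0 < n\<close> by (metis of_nat_0_less_iff)
  have "window_limsup f (real n) < ereal (l + e)" using l \<open>0 < e\<close> by simp
  then have "\<forall>\<^sub>F x in at_top. ereal ((1 / real n) * integral {x..x + real n} f) < ereal (l + e)"
    unfolding window_limsup_def by (rule Limsup_lessD)
  then obtain X where X: "\<And>x. X \<le> x \<Longrightarrow> (1 / real n) * integral {x..x + real n} f < l + e"
    unfolding eventually_at_top_linorder by auto
  have Af: "unit_avg f \<in> Cub" using unit_avg_Cub[OF f] .
  define h where "h = (\<lambda>x. \<Sum>j<n. (1 / real n) * shiftT (real j * 1) (unit_avg f) x)"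
  have h: "h \<in> Cub" unfolding h_def by (rule Cub_sum) (use Cub_shiftT[OF Af] in simp)
  have "\<psi> h \<le> l + e"
  proof (rule Mtau_le_if_eventually_le[OF \<psi> h, of "max X 0"])
    fix x assume x: "max X 0 \<le> x"
    have "h x = (1 / real n) * (\<Sum>j<n. integral {x + real j * 1..x + real j * 1 + 1} f)"
      using x by (simp add: h_def shiftT_def unit_avg_def sum_distrib_left add.assoc)
    also have "(\<Sum>j<n. integral {x + real j * 1..x + real j * 1 + 1} f) = integral {x..x + real n * 1} f"
      by (rule integral_eq_sum_subintervals[OF Linf_integrable_on[OF f], symmetric]) simp
    finally show "h x \<le> l + e" using X[of x] x by simp
  qed simp
  then show "ereal (\<psi> (unit_avg f)) \<le> window_limsup f (real n) + ereal e"
    using Mtau_average_of_shifts[OF \<psi> Af _ \<open>0 < n\<close>, of 1] l unfolding h_def by simp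
qed

lemma Mtau_unit_avg_le_upper_M1:
  assumes \<psi>: "\<psi> \<in> Mtau" and f: "f \<in> Linf"
  shows "ereal (\<psi> (unit_avg f)) \<le> upper_M1 f"
proof -
  have "((\<lambda>n. window_limsup f (real n)) \<longlongrightarrow> Limsup at_top (window_limsup f)) sequentially"
    by (rule filterlim_compose[OF window_limsup_tendsto[OF f] filterlim_real_sequentially])
  then show ?thesis unfolding upper_M1_eq_Limsup_window_limsup[OF f]
    by (rule LIMSEQ_le_const)
       (use Mtau_unit_avg_le_window_limsup[OF \<psi> f] in \<open>auto intro!: exI[of _ 1]\<close>)
qed

definition restrict_Cub :: "((real \<Rightarrow> real) \<Rightarrow> real) \<Rightarrow> (real \<Rightarrow> real) \<Rightarrow> real" where
  "restrict_Cub \<phi> = (\<lambda>f. if f \<in> Cub then \<phi> f else 0)"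

definition compose_unit_avg :: "((real \<Rightarrow> real) \<Rightarrow> real) \<Rightarrow> (real \<Rightarrow> real) \<Rightarrow> real" where
  "compose_unit_avg \<psi> = (\<lambda>f. if f \<in> Linf then \<psi> (unit_avg f) else 0)"

lemma restrict_Cub_in_Mtau:
  assumes \<phi>: "\<phi> \<in> M1"
  shows "restrict_Cub \<phi> \<in> Mtau"
proof -
  have m: "mean_Linf \<phi>" using M1_mean_Linf[OF \<phi>] .
  have "lin_on Cub (restrict_Cub \<phi>)"
    unfolding lin_on_def
  proof (intro ballI allI)
    fix f g a b assume f: "f \<in> Cub" and g: "g \<in> Cub"
    show "restrict_Cub \<phi> (\<lambda>x. a * f x + b * g x) = a * restrict_Cub \<phi> f + b * restrict_Cub \<phi> g"
      using Cub_lin_comb[OF f g] f g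
        mean_Linf_lin_comb[OF m subsetD[OF Cub_subset_Linf f] subsetD[OF Cub_subset_Linf g]]
      by (simp add: restrict_Cub_def)
  qed
  moreover have "0 \<le> restrict_Cub \<phi> f" if "f \<in> Cub" and "\<forall>x\<ge>0. 0 \<le> f x" for f
    using m that Cub_subset_Linf unfolding mean_Linf_def restrict_Cub_def by auto
  moreover have "restrict_Cub \<phi> one_plus = 1"
    using m one_plus_Cub unfolding mean_Linf_def restrict_Cub_def by auto
  moreover have "restrict_Cub \<phi> (shiftT s f) = restrict_Cub \<phi> f" if "0 \<le> s" "f \<in> Cub" for s f
    using M1_shiftT_invariant[OF \<phi> that(2,1)] Cub_shiftT[OF that(2,1)] that
    by (simp add: restrict_Cub_def)
  ultimately show ?thesis unfolding Mtau_def mean_Cub_def by (simp add: restrict_Cub_def)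
qed

lemma compose_unit_avg_in_M1:
  assumes \<psi>: "\<psi> \<in> Mtau"
  shows "compose_unit_avg \<psi> \<in> M1"
proof -
  have m: "mean_Cub \<psi>" using Mtau_mean_Cub[OF \<psi>] .
  have "lin_on Linf (compose_unit_avg \<psi>)"
    unfolding lin_on_def
  proof (intro ballI allI)
    fix f g a b assume f: "f \<in> Linf" and g: "g \<in> Linf"
    show "compose_unit_avg \<psi> (\<lambda>x. a * f x + b * g x) = a * compose_unit_avg \<psi> f + b * compose_unit_avg \<psi> g"
      using Linf_lin_comb[OF f g] mean_Cub_lin_comb[OF m unit_avg_Cub[OF f] unit_avg_Cub[OF g]] f g
      by (simp add: compose_unit_avg_def unit_avg_lin_comb[OF f g])
  qed
  moreover have "0 \<le> compose_unit_avg \<psi> f"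
    if f: "f \<in> Linf" and "AE x in lebesgue. 0 \<le> x \<longrightarrow> 0 \<le> f x" for f
    using mean_Cub_nonneg[OF m unit_avg_Cub[OF f] unit_avg_nonneg[OF that]] f
    by (simp add: compose_unit_avg_def)
  moreover have "compose_unit_avg \<psi> one_plus = 1"
    using Cub_subset_Linf one_plus_Cub mean_Cub_one_plus[OF m]
    by (auto simp: compose_unit_avg_def unit_avg_one_plus)
  moreover have "ereal (compose_unit_avg \<psi> f) \<le> upper_M1 f" if "f \<in> Linf" for f
    using Mtau_unit_avg_le_upper_M1[OF \<psi> that] that by (simp add: compose_unit_avg_def)
  ultimately show ?thesis unfolding M1_def mean_Linf_def by (simp add: compose_unit_avg_def)
qed

lemma compose_unit_avg_restrict_Cub:
  assumes \<phi>: "\<phi> \<in> M1"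
  shows "compose_unit_avg (restrict_Cub \<phi>) = \<phi>"
  using unit_avg_Cub M1_unit_avg[OF \<phi>] M1_mean_Linf[OF \<phi>]
  by (auto simp: fun_eq_iff compose_unit_avg_def restrict_Cub_def mean_Linf_def)

lemma restrict_Cub_compose_unit_avg:
  assumes \<psi>: "\<psi> \<in> Mtau"
  shows "restrict_Cub (compose_unit_avg \<psi>) = \<psi>"
  using Cub_subset_Linf Mtau_unit_avg[OF \<psi>] Mtau_mean_Cub[OF \<psi>]
  by (auto simp: fun_eq_iff compose_unit_avg_def restrict_Cub_def mean_Cub_def)

lemma topspace_weak_star [simp]: "topspace (weak_star S) = S"
  unfolding weak_star_def by simp

lemma continuous_map_weak_star_eval: "continuous_map (weak_star S) euclideanreal (\<lambda>\<phi>. \<phi> k)"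
  unfolding weak_star_def
  by (rule continuous_map_from_subtopology[OF continuous_map_product_projection]) simp

lemma continuous_map_weak_star:
  assumes "\<And>\<phi>. \<phi> \<in> S \<Longrightarrow> F \<phi> \<in> T"
    and "\<And>k. continuous_map (weak_star S) euclideanreal (\<lambda>\<phi>. F \<phi> k)"
  shows "continuous_map (weak_star S) (weak_star T) F"
proof -
  have "continuous_map (weak_star S) (product_topology (\<lambda>_. euclideanreal) UNIV) F"
    using assms(2) unfolding continuous_map_componentwise_UNIV by blast
  then show ?thesis
    using assms(1) unfolding weak_star_def[of T] by (simp add: continuous_map_in_subtopology)
qed

lemma restrict_Cub_continuous: "continuous_map (weak_star M1) (weak_star Mtau) restrict_Cub"
proof (rule continuous_map_weak_star[OF restrict_Cub_in_Mtau])
  show "continuous_map (weak_star M1) euclideanreal (\<lambda>\<phi>. restrict_Cub \<phi> k)" for k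
    by (cases "k \<in> Cub") (simp_all add: restrict_Cub_def continuous_map_weak_star_eval)
qed

lemma compose_unit_avg_continuous: "continuous_map (weak_star Mtau) (weak_star M1) compose_unit_avg"
proof (rule continuous_map_weak_star[OF compose_unit_avg_in_M1])
  show "continuous_map (weak_star Mtau) euclideanreal (\<lambda>\<psi>. compose_unit_avg \<psi> k)" for k
    by (cases "k \<in> Linf") (simp_all add: compose_unit_avg_def continuous_map_weak_star_eval)
qed

theorem theorem3p6:
  shows "\<exists>h. homeomorphic_map (weak_star M1) (weak_star Mtau) h
           \<and> (\<forall>\<phi>\<in>M1. \<forall>\<psi>\<in>M1. \<forall>t::real. 0 \<le> t \<and> t \<le> 1 \<longrightarrow>
                h (\<lambda>f. t * \<phi> f + (1 - t) * \<psi> f) = (\<lambda>f. t * h \<phi> f + (1 - t) * h \<psi> f))"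
proof (intro exI[of _ restrict_Cub] conjI)
  have "homeomorphic_maps (weak_star M1) (weak_star Mtau) restrict_Cub compose_unit_avg"
    unfolding homeomorphic_maps_def
    using restrict_Cub_continuous compose_unit_avg_continuous
      compose_unit_avg_restrict_Cub restrict_Cub_compose_unit_avg
    by simp
  then show "homeomorphic_map (weak_star M1) (weak_star Mtau) restrict_Cub"
    unfolding homeomorphic_map_maps by blast
  show "\<forall>\<phi>\<in>M1. \<forall>\<psi>\<in>M1. \<forall>t::real. 0 \<le> t \<and> t \<le> 1 \<longrightarrow> restrict_Cub (\<lambda>f. t * \<phi> f + (1 - t) * \<psi> f)
          = (\<lambda>f. t * restrict_Cub \<phi> f + (1 - t) * restrict_Cub \<psi> f)"
    by (simp add: restrict_Cub_def fun_eq_iff)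
qed

end
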